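(* Let $g\in\mathscr H$. For every $f\in\mathscr H$ such that $L(f)=g$, one has $\operatorname{val} f\in\{\pi(\operatorname{val} g)\}\cup-\mathcal S(L)$.
   Context: Let $\mathbf K$ be a field and $\ell\geq 2$ an integer. Let $\mathscr H$ be the field of Hahn series $f=\sum_{\gamma\in\mathbb Q}f_\gamma z^\gamma$ with coefficients in $\mathbf K$ and well-ordered support $\operatorname{supp} f=\{\gamma: f_\gamma\neq 0\}$, with $\operatorname{val} f=\min\operatorname{supp} f$ ($\operatorname{val}0=+\infty$). Let $\phi_\ell$ be the automorphism $f(z)\mapsto f(z^\ell)$. Let $L=a_n\phi_\ell^n+\dots+a_0$ with $n\geq1$, $a_i\in\mathbf K[z]$, $a_0a_n\neq0$, acting by $L(f)=\sum_i a_i f(z^{\ell^i})$. Let $\mathcal P(L)=\{(\ell^i,j): 0\le i\le n,\ j\in\operatorname{supp} a_i\}$. The Newton polygon $\mathcal N(L)$ is the convex hull of $\{(\ell^i,j): 0\le i\le n,\ j\geq\operatorname{val} a_i\}\subset\mathbb R^2$; the slopes of its non-vertical edges form the set $\mathcal S(L)$, and $-\mathcal S(L)=\{-\mu:\mu\in\mathcal S(L)\}$. Define $\pi(q)=\max\{(q-j)/\ell^i:(\ell^i,j)\in\mathcal P(L)\}$ for $q\in\mathbb Q$, and $\pi(+\infty)=+\infty$. *)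

theory Defs
  imports "HOL-Analysis.Analysis" "HOL-Computational_Algebra.Polynomial"
begin

text \<open>Hahn series over 'k with rational exponents: f :: rat => 'k, f gamma is the
coefficient of z^gamma; the support must be well-ordered.\<close>

definition hsupp :: "(rat \<Rightarrow> 'k::zero) \<Rightarrow> rat set" where
  "hsupp f = {\<gamma>. f \<gamma> \<noteq> 0}"

definition is_hahn :: "(rat \<Rightarrow> 'k::zero) \<Rightarrow> bool" where
  "is_hahn f \<longleftrightarrow> (\<forall>A. A \<subseteq> hsupp f \<longrightarrow> A \<noteq> {} \<longrightarrow> (\<exists>m\<in>A. \<forall>x\<in>A. m \<le> x))"

text \<open>Valuation; None stands for +infinity (val 0 = +infinity).\<close>
definition hval :: "(rat \<Rightarrow> 'k::zero) \<Rightarrow> rat option" where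
  "hval f = (if hsupp f = {} then None else Some (LEAST \<gamma>. \<gamma> \<in> hsupp f))"

text \<open>Action of L = a_n phi^n + ... + a_0 on a Hahn series:
  L(f) = sum_i a_i(z) f(z^(l^i)); coefficient at gamma of z^j f(z^(l^i)) is f((gamma-j)/l^i).\<close>
definition Lop :: "nat \<Rightarrow> nat \<Rightarrow> (nat \<Rightarrow> 'k::field poly) \<Rightarrow> (rat \<Rightarrow> 'k) \<Rightarrow> (rat \<Rightarrow> 'k)" where
  "Lop l n a f = (\<lambda>\<gamma>. \<Sum>i\<le>n. \<Sum>j\<le>degree (a i).
      coeff (a i) j * f ((\<gamma> - of_nat j) / of_nat (l ^ i)))"

definition PL :: "nat \<Rightarrow> nat \<Rightarrow> (nat \<Rightarrow> 'k::zero poly) \<Rightarrow> (nat \<times> nat) set" where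
  "PL l n a = {(l ^ i, j) | i j. i \<le> n \<and> coeff (a i) j \<noteq> 0}"

definition piL :: "nat \<Rightarrow> nat \<Rightarrow> (nat \<Rightarrow> 'k::zero poly) \<Rightarrow> rat option \<Rightarrow> rat option" where
  "piL l n a q = (case q of None \<Rightarrow> None
     | Some q' \<Rightarrow> Some (Max ((\<lambda>(x, j). (q' - of_nat j) / of_nat x) ` PL l n a)))"

definition newton_polygon :: "nat \<Rightarrow> nat \<Rightarrow> (nat \<Rightarrow> 'k::zero poly) \<Rightarrow> (real \<times> real) set" where
  "newton_polygon l n a = convex hull
     {(real (l ^ i), y) | i y. i \<le> n \<and> (\<exists>j. coeff (a i) j \<noteq> 0 \<and> real j \<le> y)}"

definition newton_slopes :: "nat \<Rightarrow> nat \<Rightarrow> (nat \<Rightarrow> 'k::zero poly) \<Rightarrow> real set" where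
  "newton_slopes l n a = {\<mu>. \<exists>E. E face_of newton_polygon l n a \<and> aff_dim E = 1 \<and>
      (\<exists>p\<in>E. \<exists>q\<in>E. fst p \<noteq> fst q \<and> \<mu> = (snd q - snd p) / (fst q - fst p))}"

end

theory Submission imports Defs begin

text \<open>If val f = v, the term a_ij z^j f(z^(l^i)) of L(f) has valuation j + l^i v. Let m be the
least of these term valuations. If it is attained by a single pair (i,j), nothing can cancel
the coefficient a_ij f_v at z^m, so val L(f) = m, and solving j + l^i v = m for v gives
v = pi(m). If it is attained by two pairs, they have different i, and the line
{(x,y). v x + y = m} supports the Newton polygon along an edge through both points, whose
slope is -v.\<close>

definition coeff_pairs :: "nat \<Rightarrow> (nat \<Rightarrow> 'k::zero poly) \<Rightarrow> (nat \<times> nat) set" where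
  "coeff_pairs n a = {(i, j). i \<le> n \<and> coeff (a i) j \<noteq> 0}"

definition term_val :: "nat \<Rightarrow> rat \<Rightarrow> nat \<times> nat \<Rightarrow> rat" where
  "term_val l v = (\<lambda>(i, j). of_nat j + of_nat (l ^ i) * v)"

lemma coeff_pairs_subset: "coeff_pairs n a \<subseteq> Sigma {..n} (\<lambda>i. {..degree (a i)})"
  using le_degree by (fastforce simp: coeff_pairs_def)

lemma finite_coeff_pairs: "finite (coeff_pairs n a)"
  using coeff_pairs_subset by (rule finite_subset) auto

lemma coeff_pairs_nonempty:
  assumes "i \<le> n" and "a i \<noteq> 0"
  shows "coeff_pairs n a \<noteq> {}"
  using assms by (auto simp: coeff_pairs_def dest: leading_coeff_neq_0)

lemma coeff_pairs_obtain_min: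
  fixes h :: "nat \<times> nat \<Rightarrow> 'b::linorder"
  assumes "coeff_pairs n a \<noteq> {}"
  obtains i0 j0 where "(i0, j0) \<in> coeff_pairs n a"
    and "\<And>p. p \<in> coeff_pairs n a \<Longrightarrow> h (i0, j0) \<le> h p"
proof -
  have "Min (h ` coeff_pairs n a) \<in> h ` coeff_pairs n a"
    using assms by (simp add: finite_coeff_pairs)
  then obtain i0 j0 where "(i0, j0) \<in> coeff_pairs n a" and "h (i0, j0) = Min (h ` coeff_pairs n a)"
    by auto
  with that show ?thesis
    by (simp add: finite_coeff_pairs)
qed

lemma PL_eq_image_coeff_pairs: "PL l n a = (\<lambda>(i, j). (l ^ i, j)) ` coeff_pairs n a"
  by (auto simp: PL_def coeff_pairs_def)

lemma Lop_eq_sum_coeff_pairs: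
  "Lop l n a f \<gamma> =
     (\<Sum>(i, j)\<in>coeff_pairs n a. coeff (a i) j * f ((\<gamma> - of_nat j) / of_nat (l ^ i)))"
proof -
  have "Lop l n a f \<gamma> = (\<Sum>(i, j)\<in>Sigma {..n} (\<lambda>i. {..degree (a i)}).
          coeff (a i) j * f ((\<gamma> - of_nat j) / of_nat (l ^ i)))"
    unfolding Lop_def by (rule sum.Sigma) auto
  also have "\<dots> = (\<Sum>(i, j)\<in>coeff_pairs n a. coeff (a i) j * f ((\<gamma> - of_nat j) / of_nat (l ^ i)))"
    by (rule sum.mono_neutral_right[OF _ coeff_pairs_subset]) (auto simp: coeff_pairs_def)
  finally show ?thesis .
qed

lemma hval_eq_SomeI:
  assumes "v \<in> hsupp f" and "\<And>x. x \<in> hsupp f \<Longrightarrow> v \<le> x"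
  shows "hval f = Some v"
proof -
  have "(LEAST x. x \<in> hsupp f) = v"
    using assms by (intro Least_equality) auto
  with assms(1) show ?thesis
    by (auto simp: hval_def)
qed

lemma hval_eq_None_iff: "hval f = None \<longleftrightarrow> (\<forall>x. f x = 0)"
  by (simp add: hval_def hsupp_def)

lemma is_hahn_obtain_hval:
  assumes "is_hahn f" and "hsupp f \<noteq> {}"
  obtains v where "hval f = Some v" and "f v \<noteq> 0" and "\<And>x. x < v \<Longrightarrow> f x = 0"
proof -
  obtain v where v: "v \<in> hsupp f" "\<And>x. x \<in> hsupp f \<Longrightarrow> v \<le> x"
    using assms(1)[unfolded is_hahn_def, rule_format, of "hsupp f"] assms(2) by blast
  then have "f x = 0" if "x < v" for x
    using that by (force simp: hsupp_def)
  with v show ?thesis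
    using that hval_eq_SomeI[OF v] by (simp add: hsupp_def)
qed

lemma term_val_le_iff:
  assumes "l > 0"
  shows "m \<le> term_val l v (i, j) \<longleftrightarrow> (m - of_nat j) / of_nat l ^ i \<le> v"
  using assms by (simp add: term_val_def divide_le_eq algebra_simps)

lemma term_val_less_iff:
  assumes "l > 0"
  shows "\<gamma> < term_val l v (i, j) \<longleftrightarrow> (\<gamma> - of_nat j) / of_nat l ^ i < v"
  using assms by (simp add: term_val_def pos_divide_less_eq algebra_simps)

lemma term_val_solve:
  assumes "l > 0"
  shows "(term_val l v (i, j) - of_nat j) / of_nat l ^ i = v"
  using assms by (simp add: term_val_def)

lemma Lop_below_term_vals:
  assumes "l > 0" and "\<And>x. x < v \<Longrightarrow> f x = 0"
    and "\<And>p. p \<in> coeff_pairs n a \<Longrightarrow> \<gamma> < term_val l v p"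
  shows "Lop l n a f \<gamma> = 0"
  unfolding Lop_eq_sum_coeff_pairs
  using assms by (intro sum.neutral) (force simp: term_val_less_iff)

lemma Lop_at_unique_min_term_val:
  assumes "l > 0" and "\<And>x. x < v \<Longrightarrow> f x = 0" and "(i0, j0) \<in> coeff_pairs n a"
    and "\<And>p. p \<in> coeff_pairs n a - {(i0, j0)} \<Longrightarrow> term_val l v (i0, j0) < term_val l v p"
  shows "Lop l n a f (term_val l v (i0, j0)) = coeff (a i0) j0 * f v"
proof -
  let ?m = "term_val l v (i0, j0)"
  let ?t = "\<lambda>(i, j). coeff (a i) j * f ((?m - of_nat j) / of_nat (l ^ i))"
  have "Lop l n a f ?m = ?t (i0, j0) + sum ?t (coeff_pairs n a - {(i0, j0)})"
    unfolding Lop_eq_sum_coeff_pairs by (rule sum.remove[OF finite_coeff_pairs assms(3)])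
  also have "sum ?t (coeff_pairs n a - {(i0, j0)}) = 0"
    using assms(1,2,4) by (intro sum.neutral) (force simp: term_val_less_iff)
  finally show ?thesis
    using term_val_solve[OF assms(1)] by simp
qed

lemma hval_Lop_unique_min_term_val:
  assumes "l > 0" and "f v \<noteq> 0" and "\<And>x. x < v \<Longrightarrow> f x = 0" and "p0 \<in> coeff_pairs n a"
    and "\<And>p. p \<in> coeff_pairs n a - {p0} \<Longrightarrow> term_val l v p0 < term_val l v p"
  shows "hval (Lop l n a f) = Some (term_val l v p0)"
proof (rule hval_eq_SomeI)
  obtain i0 j0 where p0: "p0 = (i0, j0)" by fastforce
  have "coeff (a i0) j0 \<noteq> 0"
    using assms(4) by (simp add: p0 coeff_pairs_def)
  then show "term_val l v p0 \<in> hsupp (Lop l n a f)"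
    using Lop_at_unique_min_term_val[of l v f i0 j0 n a] assms
    by (simp add: p0 hsupp_def)
next
  fix x assume x: "x \<in> hsupp (Lop l n a f)"
  show "term_val l v p0 \<le> x"
  proof (rule ccontr)
    assume "\<not> term_val l v p0 \<le> x"
    then have "x < term_val l v p" if "p \<in> coeff_pairs n a" for p
      using assms(5)[of p] that by (cases "p = p0") auto
    with assms(1,3) have "Lop l n a f x = 0"
      by (rule Lop_below_term_vals)
    with x show False by (simp add: hsupp_def)
  qed
qed

lemma piL_at_min_term_val:
  assumes "l > 0" and "p0 \<in> coeff_pairs n a"
    and "\<And>p. p \<in> coeff_pairs n a \<Longrightarrow> term_val l v p0 \<le> term_val l v p"
  shows "piL l n a (Some (term_val l v p0)) = Some v"
proof -
  let ?m = "term_val l v p0"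
  have "Max ((\<lambda>(x, j). (?m - of_nat j) / of_nat x) ` PL l n a) = v"
  proof (rule Max_eqI)
    show "finite ((\<lambda>(x, j). (?m - of_nat j) / of_nat x) ` PL l n a)"
      by (simp add: PL_eq_image_coeff_pairs finite_coeff_pairs)
  next
    fix y assume "y \<in> (\<lambda>(x, j). (?m - of_nat j) / of_nat x) ` PL l n a"
    then show "y \<le> v"
      using assms(1,3) by (auto simp: PL_eq_image_coeff_pairs term_val_le_iff)
  next
    obtain i0 j0 where p0: "p0 = (i0, j0)" by fastforce
    have "(l ^ i0, j0) \<in> PL l n a"
      using assms(2) by (auto simp: PL_eq_image_coeff_pairs p0)
    moreover have "(?m - of_nat j0) / of_nat (l ^ i0) = v"
      using term_val_solve[OF assms(1)] by (simp add: p0)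
    ultimately show "v \<in> (\<lambda>(x, j). (?m - of_nat j) / of_nat x) ` PL l n a"
      by force
  qed
  then show ?thesis by (simp add: piL_def)
qed

lemma newton_slope_if_min_term_val_twice:
  fixes a :: "nat \<Rightarrow> 'k::zero poly"
  assumes "l \<ge> 2" and "(i, j) \<in> coeff_pairs n a" and "(k, j') \<in> coeff_pairs n a" and "i \<noteq> k"
    and "term_val l v (i, j) = term_val l v (k, j')"
    and "\<And>p. p \<in> coeff_pairs n a \<Longrightarrow> term_val l v (i, j) \<le> term_val l v p"
  shows "- real_of_rat v \<in> newton_slopes l n a"
proof -
  define w :: "real \<times> real" where "w = (real_of_rat v, 1)"
  define m where "m = real_of_rat (term_val l v (i, j))"
  define S where "S = {(real (l ^ i), y) | i y. i \<le> n \<and> (\<exists>j. coeff (a i) j \<noteq> 0 \<and> real j \<le> y)}"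
  have polygon: "newton_polygon l n a = convex hull S"
    by (simp add: newton_polygon_def S_def)
  define E where "E = newton_polygon l n a \<inter> {x. w \<bullet> x = m}"
  have real_term_val: "real_of_rat (term_val l v (i', j'')) = real j'' + real (l ^ i') * real_of_rat v"
    for i' j'' by (simp add: term_val_def of_rat_add of_rat_mult of_rat_power)
  have "S \<subseteq> {x. m \<le> w \<bullet> x}"
  proof
    fix x assume "x \<in> S"
    then obtain i' y j'' where x: "x = (real (l ^ i'), y)" "(i', j'') \<in> coeff_pairs n a" "real j'' \<le> y"
      by (auto simp: S_def coeff_pairs_def)
    have "m \<le> real_of_rat (term_val l v (i', j''))"
      using assms(6)[OF x(2)] by (simp add: m_def of_rat_less_eq)
    then show "x \<in> {x. m \<le> w \<bullet> x}"
      using x(1,3) by (simp add: real_term_val w_def inner_prod_def algebra_simps)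
  qed
  then have "newton_polygon l n a \<subseteq> {x. m \<le> w \<bullet> x}"
    unfolding polygon using convex_halfspace_ge by (rule hull_minimal)
  then have face: "E face_of newton_polygon l n a"
    unfolding E_def polygon
    by (intro face_of_Int_supporting_hyperplane_ge) (auto intro: convex_convex_hull)
  define p where "p = (real (l ^ i), real j)"
  define q where "q = (real (l ^ k), real j')"
  have "p \<in> S" "q \<in> S"
    using assms(2,3) by (auto simp: S_def p_def q_def coeff_pairs_def)
  moreover have "w \<bullet> p = m"
    by (simp add: m_def p_def w_def inner_prod_def real_term_val algebra_simps)
  moreover have "w \<bullet> q = m"
    using assms(5) by (simp add: m_def q_def w_def inner_prod_def real_term_val algebra_simps)
  ultimately have pq: "p \<in> E" "q \<in> E"
    by (simp_all add: E_def polygon hull_inc)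
  have fst_ne: "fst p \<noteq> fst q"
    using assms(1,4) by (simp add: p_def q_def power_inject_exp)
  have "aff_dim {p, q} = 1"
    using fst_ne by auto
  then have "1 \<le> aff_dim E"
    using pq by (metis aff_dim_subset empty_subsetI insert_subset)
  moreover have "aff_dim E \<le> aff_dim {x. w \<bullet> x = m}"
    by (rule aff_dim_subset) (auto simp: E_def)
  moreover have "aff_dim {x. w \<bullet> x = m} = 1"
    by (simp add: w_def zero_prod_def)
  ultimately have "aff_dim E = 1" by simp
  moreover have "- real_of_rat v = (snd q - snd p) / (fst q - fst p)"
    using fst_ne \<open>w \<bullet> p = m\<close> \<open>w \<bullet> q = m\<close>
    by (simp add: p_def q_def w_def inner_prod_def field_simps)
  ultimately show ?thesis
    unfolding newton_slopes_def using face pq fst_ne by blast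
qed

theorem mainTheorem4:
  fixes l n :: nat and a :: "nat \<Rightarrow> 'k::field poly" and f g :: "rat \<Rightarrow> 'k"
  assumes "l \<ge> 2" and "n \<ge> 1" and "a 0 \<noteq> 0" and "a n \<noteq> 0"
    and "is_hahn g" and "is_hahn f" and "Lop l n a f = g"
  shows "hval f = piL l n a (hval g) \<or>
         (\<exists>\<gamma>. hval f = Some \<gamma> \<and> real_of_rat \<gamma> \<in> uminus ` newton_slopes l n a)"
proof (cases "hsupp f = {}")
  case True
  then have "hval f = None" and "hval g = None"
    unfolding assms(7)[symmetric] by (simp_all add: hval_eq_None_iff hsupp_def Lop_def)
  then show ?thesis by (simp add: piL_def)
next
  case False
  then obtain v where hf: "hval f = Some v" and fv: "f v \<noteq> 0" and below: "\<And>x. x < v \<Longrightarrow> f x = 0"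
    using assms(6) is_hahn_obtain_hval by blast
  let ?T = "coeff_pairs n a" and ?w = "term_val l v"
  obtain i0 j0 where p0: "(i0, j0) \<in> ?T" and min: "\<And>p. p \<in> ?T \<Longrightarrow> ?w (i0, j0) \<le> ?w p"
    using coeff_pairs_obtain_min coeff_pairs_nonempty[of 0 n a] assms(3) by blast
  show ?thesis
  proof (cases "\<exists>p\<in>?T. p \<noteq> (i0, j0) \<and> ?w p = ?w (i0, j0)")
    case True
    then obtain i j where p: "(i, j) \<in> ?T" "(i, j) \<noteq> (i0, j0)" "?w (i, j) = ?w (i0, j0)"
      by auto
    then have "i0 \<noteq> i"
      by (auto simp: term_val_def)
    then have "- real_of_rat v \<in> newton_slopes l n a"
      using newton_slope_if_min_term_val_twice[OF assms(1) p0 p(1) _ p(3)[symmetric] min] by blast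
    then show ?thesis
      using hf by force
  next
    case False
    then have "\<And>p. p \<in> ?T - {(i0, j0)} \<Longrightarrow> ?w (i0, j0) < ?w p"
      using min by (auto simp: order.strict_iff_order)
    with assms(1) fv below p0 have "hval g = Some (?w (i0, j0))"
      unfolding assms(7)[symmetric] by (intro hval_Lop_unique_min_term_val) auto
    then show ?thesis
      using piL_at_min_term_val[of l "(i0, j0)" n a v] assms(1) p0 min hf by simp
  qed
qed

end
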